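(* Suppose $f$ is convex and $L_f$-smooth, $L_{\mathbf S}^{\max}<\infty$, and $\tilde f$ has a minimizer $x^\star_{\mathcal D}$. Let $0<\gamma\le 1/(2L_fL_{\mathbf S}^{\max})$, $T\ge1$, let $(x^t)$ be generated by Double Sketched GD and let $\bar x^T$ be chosen uniformly at random from $\{x^0,\dots,x^{T-1}\}$. Then $$\mathbb E\big[\tilde f(\bar x^T)-\tilde f^{\inf}\big]\le\frac{\|x^0-x^\star_{\mathcal D}\|^2}{\gamma T}+2\gamma L_fL_{\mathbf S}^{\max}\big(\tilde f^{\inf}-f^{\inf}\big).$$
   Context: Let $f:\mathbb R^d\to\mathbb R$, fix $s\in\mathbb R^d$, and let $\mathcal D$ be a distribution of random matrices $\mathbf S\in\mathbb R^{d\times d}$ with $\mathbb E[\mathbf S]=I$ and $\mathbb E[\mathbf S^\top\mathbf S]$ finite. Define $f_{\mathbf S}(x)=f(s+\mathbf S(x-s))$, $\tilde f(x)=\mathbb E_{\mathbf S\sim\mathcal D}[f_{\mathbf S}(x)]$, $\tilde f^{\inf}=\inf_x\tilde f(x)$, and $L_{\mathbf S}^{\max}$ the smallest constant with $\lambda_{\max}(\mathbf S^\top\mathbf S)\le L_{\mathbf S}^{\max}$ a.s. Double Sketched GD: given $x^0$, for $t\ge0$ draw $\mathbf S^t\sim\mathcal D$ independently of the past and set $x^{t+1}=x^t-\gamma(\mathbf S^t)^\top\nabla f(s+\mathbf S^t(x^t-s))$. $f$ is $L_f$-smooth if differentiable, $f(x+h)\le f(x)+\langle\nabla f(x),h\rangle+\frac{L_f}{2}\|h\|^2$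 for all $x,h$, and bounded below by $f^{\inf}\in\mathbb R$. *)

theory Defs
  imports "HOL-Analysis.Analysis" "HOL-Probability.Probability"
begin

text \<open>Largest eigenvalue of a (real, square) matrix: the maximum of its real eigenvalues.
  Applied only to symmetric positive semidefinite matrices S^T S.\<close>
definition lambda_max :: "real^'n^'n \<Rightarrow> real" where
  "lambda_max A = Max {l. \<exists>v. v \<noteq> 0 \<and> A *v v = l *\<^sub>R v}"

definition L_S_max :: "(real^'n^'n) measure \<Rightarrow> real" where
  "L_S_max D = Inf {L. AE S in D. lambda_max (transpose S ** S) \<le> L}"

definition f_sketch :: "(real^'n \<Rightarrow> real) \<Rightarrow> real^'n \<Rightarrow> real^'n^'n \<Rightarrow> real^'n \<Rightarrow> real" where
  "f_sketch f s S x = f (s + S *v (x - s))"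

definition f_tilde :: "(real^'n \<Rightarrow> real) \<Rightarrow> real^'n \<Rightarrow> (real^'n^'n) measure \<Rightarrow> real^'n \<Rightarrow> real" where
  "f_tilde f s D x = (\<integral>S. f_sketch f s S x \<partial>D)"

definition L_smooth :: "real \<Rightarrow> (real^'n \<Rightarrow> real) \<Rightarrow> (real^'n \<Rightarrow> real^'n) \<Rightarrow> bool" where
  "L_smooth L f g \<longleftrightarrow> (\<forall>x. (f has_derivative (\<lambda>h. g x \<bullet> h)) (at x)) \<and>
     (\<forall>x h. f (x + h) \<le> f x + g x \<bullet> h + L / 2 * (norm h)^2)"

text \<open>Double Sketched GD iterates, driven by a sequence of sketches \<omega> t = S^t.\<close>
primrec dsgd :: "(real^'n \<Rightarrow> real^'n) \<Rightarrow> real^'n \<Rightarrow> real \<Rightarrow> real^'n \<Rightarrow> (nat \<Rightarrow> real^'n^'n) \<Rightarrow> nat \<Rightarrow> real^'n" where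
  "dsgd g s \<gamma> x0 \<omega> 0 = x0"
| "dsgd g s \<gamma> x0 \<omega> (Suc t) =
     dsgd g s \<gamma> x0 \<omega> t - \<gamma> *\<^sub>R (transpose (\<omega> t) *v g (s + \<omega> t *v (dsgd g s \<gamma> x0 \<omega> t - s)))"

end

theory Submission
  imports Defs
begin

text \<open>Convexity of \<open>f\<close> and the tangent inequality at the sketched point show that one step
  of Double Sketched GD decreases \<open>\<parallel>x - x\<^sup>\<star>\<parallel>\<^sup>2\<close> in expectation by \<open>2\<gamma>(f\<^sub>\<sim>(x) - f\<^sub>\<sim>(x\<^sup>\<star>))\<close>,
  up to the squared length \<open>\<gamma>\<^sup>2\<parallel>S\<^sup>T\<nabla>f(s + S(x - s))\<parallel>\<^sup>2\<close> of the step. Smoothness and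
  \<open>\<lambda>\<^sub>m\<^sub>a\<^sub>x(S\<^sup>TS) \<le> L\<^sub>S\<close> bound the latter by \<open>2L\<^sub>fL\<^sub>S(f(s + S(x - s)) - f\<^sup>i\<^sup>n\<^sup>f)\<close>, whose expectation
  is \<open>2L\<^sub>fL\<^sub>S(f\<^sub>\<sim>(x) - f\<^sub>\<sim>(x\<^sup>\<star>)) + 2L\<^sub>fL\<^sub>S(f\<^sub>\<sim>(x\<^sup>\<star>) - f\<^sup>i\<^sup>n\<^sup>f)\<close>; with \<open>2\<gamma>L\<^sub>fL\<^sub>S \<le> 1\<close> half of the decrease
  survives. Telescoping over \<open>T\<close> steps, using independence of the sketches, gives
  \<open>\<gamma> \<Sum>\<^sub>t<\<^sub>T E[f\<^sub>\<sim>(x\<^sup>t) - f\<^sub>\<sim>(x\<^sup>\<star>)] \<le> \<parallel>x\<^sup>0 - x\<^sup>\<star>\<parallel>\<^sup>2 + 2T\<gamma>\<^sup>2L\<^sub>fL\<^sub>S(f\<^sub>\<sim>(x\<^sup>\<star>) - f\<^sup>i\<^sup>n\<^sup>f)\<close>.\<close>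

subsection \<open>The largest eigenvalue of \<open>S\<^sup>TS\<close>\<close>

lemma inner_matrix_vector_symmetric:
  fixes A :: "real^'n^'n"
  assumes "transpose A = A"
  shows "(A *v a) \<bullet> b = a \<bullet> (A *v b)"
proof -
  have "(A *v a) \<bullet> b = (a v* transpose A) \<bullet> b" by simp
  also have "\<dots> = a \<bullet> (transpose A *v b)" by (rule dot_lmul_matrix)
  finally show ?thesis using assms by simp
qed

lemma inner_matrix_vector_transpose:
  fixes S :: "real^'n^'m"
  shows "a \<bullet> (S *v v) = (transpose S *v a) \<bullet> v"
  by (simp add: dot_lmul_matrix)

lemma finite_eigenvalues_symmetric:
  fixes A :: "real^'n^'n"
  assumes sym: "transpose A = A"
  shows "finite {l. \<exists>v. v \<noteq> 0 \<and> A *v v = l *\<^sub>R v}"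
proof -
  let ?E = "{l. \<exists>v. v \<noteq> 0 \<and> A *v v = l *\<^sub>R v}"
  define v where "v l = (SOME v. v \<noteq> 0 \<and> A *v v = l *\<^sub>R v)" for l
  have v: "v l \<noteq> 0 \<and> A *v v l = l *\<^sub>R v l" if "l \<in> ?E" for l
    using someI_ex[of "\<lambda>v. v \<noteq> 0 \<and> A *v v = l *\<^sub>R v"] that unfolding v_def by auto
  have orth: "v l \<bullet> v m = 0" if "l \<in> ?E" "m \<in> ?E" "l \<noteq> m" for l m
  proof -
    have "l * (v l \<bullet> v m) = (A *v v l) \<bullet> v m" using v[OF that(1)] by simp
    also have "\<dots> = v l \<bullet> (A *v v m)" by (rule inner_matrix_vector_symmetric[OF sym])
    also have "\<dots> = m * (v l \<bullet> v m)" using v[OF that(2)] by simp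
    finally show ?thesis using that(3) by simp
  qed
  have "inj_on v ?E"
  proof (rule inj_onI)
    fix l m assume lm: "l \<in> ?E" "m \<in> ?E" "v l = v m"
    then have "l = m \<or> v l = 0" using orth[OF lm(1,2)] by (metis inner_eq_zero_iff)
    then show "l = m" using v[OF lm(1)] by blast
  qed
  moreover have "independent (v ` ?E)"
  proof (rule pairwise_orthogonal_independent)
    show "pairwise orthogonal (v ` ?E)"
      unfolding pairwise_def orthogonal_def using orth by fastforce
    show "0 \<notin> v ` ?E" using v by force
  qed
  then have "finite (v ` ?E)" by (rule finiteI_independent)
  ultimately show ?thesis using finite_imageD by blast
qed

lemma quadratic_nonneg_imp_linear_coeff_zero:
  fixes p c :: real
  assumes nonneg: "\<And>t. 0 \<le> 2 * t * p + t^2 * c" and "0 \<le> c" "0 \<le> p"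
  shows "p = 0"
proof -
  define t where "t = - p / (c + 1)"
  have tc: "t * (c + 1) = - p" unfolding t_def using \<open>0 \<le> c\<close> by simp
  have "(c + 1)^2 * (2 * t * p + t^2 * c) = 2 * (t * (c + 1)) * p * (c + 1) + (t * (c + 1))^2 * c"
    by (simp add: power2_eq_square algebra_simps)
  also have "\<dots> = - (p^2) * (c + 2)" unfolding tc by (simp add: power2_eq_square algebra_simps)
  finally have "(c + 1)^2 * (2 * t * p + t^2 * c) = - (p^2) * (c + 2)" .
  moreover have "0 \<le> (c + 1)^2 * (2 * t * p + t^2 * c)" using nonneg by simp
  ultimately have "p^2 * (c + 2) \<le> 0" by simp
  with \<open>0 \<le> c\<close> have "p^2 \<le> 0" by (simp add: mult_le_0_iff)
  then show ?thesis by simp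
qed

lemma self_adjoint_nonneg_form_zero_imp_zero:
  fixes B :: "'a::real_inner \<Rightarrow> 'a"
  assumes lin: "linear B" and adj: "\<And>x y. B x \<bullet> y = x \<bullet> B y"
    and psd: "\<And>x. 0 \<le> x \<bullet> B x" and zero: "x \<bullet> B x = 0"
  shows "B x = 0"
proof -
  define w where "w = B x"
  have "0 \<le> 2 * t * (w \<bullet> w) + t^2 * (w \<bullet> B w)" for t
  proof -
    have "(x + t *\<^sub>R w) \<bullet> B (x + t *\<^sub>R w) = x \<bullet> B x + 2 * t * (w \<bullet> w) + t^2 * (w \<bullet> B w)"
      using adj[of x w]
      by (simp add: linear_add[OF lin] linear_scale[OF lin] inner_add_left inner_add_right
          w_def power2_eq_square inner_commute algebra_simps)
    then show ?thesis using psd[of "x + t *\<^sub>R w"] zero by simp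
  qed
  then have "w \<bullet> w = 0" by (rule quadratic_nonneg_imp_linear_coeff_zero) (use psd in auto)
  then show ?thesis by (simp add: w_def)
qed

text \<open>The maximum of the Rayleigh quotient \<open>\<parallel>S h\<parallel>\<^sup>2 / \<parallel>h\<parallel>\<^sup>2\<close> over the unit sphere is an
  eigenvalue of \<open>S\<^sup>TS\<close>, because \<open>\<mu> I - S\<^sup>TS\<close> is positive semidefinite with the maximiser in
  its null cone.\<close>

lemma eigenvalue_bounding_norm_matrix_vector:
  fixes S :: "real^'n^'m"
  obtains \<mu> where "\<mu> \<in> {l. \<exists>v. v \<noteq> 0 \<and> (transpose S ** S) *v v = l *\<^sub>R v}" "0 \<le> \<mu>"
    and "\<And>h. (norm (S *v h))^2 \<le> \<mu> * (norm h)^2"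
proof -
  let ?A = "transpose S ** S"
  have A_form: "a \<bullet> (?A *v b) = (S *v a) \<bullet> (S *v b)" for a b
    using inner_matrix_vector_transpose[of a "transpose S" "S *v b"]
    by (simp add: matrix_vector_mul_assoc[symmetric])
  have cont: "continuous_on (sphere 0 1) (\<lambda>y. (norm (S *v y))^2)"
    by (intro continuous_intros)
  obtain h0 where h0: "norm h0 = 1"
    and max: "\<And>y. norm y = 1 \<Longrightarrow> (norm (S *v y))^2 \<le> (norm (S *v h0))^2"
    using continuous_attains_sup[OF compact_sphere _ cont] by fastforce
  define \<mu> where "\<mu> = (norm (S *v h0))^2"
  have bound: "(norm (S *v h))^2 \<le> \<mu> * (norm h)^2" for h
  proof (cases "h = 0")
    case False
    then have "(norm (S *v h))^2 / (norm h)^2 \<le> \<mu>"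
      using max[of "(1 / norm h) *\<^sub>R h"]
      unfolding \<mu>_def by (simp add: matrix_vector_mult_scaleR power_divide)
    then show ?thesis using False by (simp add: field_simps)
  qed simp
  define B where "B h = \<mu> *\<^sub>R h - ?A *v h" for h
  have "linear B"
    unfolding B_def
    by (rule linearI) (simp_all add: matrix_vector_right_distrib matrix_vector_mult_scaleR algebra_simps)
  moreover have "B x \<bullet> y = x \<bullet> B y" for x y
    using inner_matrix_vector_symmetric[of ?A x y]
    by (simp add: B_def inner_diff_left inner_diff_right matrix_transpose_mul)
  moreover have "0 \<le> x \<bullet> B x" for x
    using bound[of x] by (simp add: B_def inner_diff_right A_form power2_norm_eq_inner)
  moreover have "h0 \<bullet> B h0 = 0"
    using h0 by (simp add: norm_eq_1 B_def inner_diff_right A_form \<mu>_def power2_norm_eq_inner)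
  ultimately have "B h0 = 0" by (rule self_adjoint_nonneg_form_zero_imp_zero)
  then have "?A *v h0 = \<mu> *\<^sub>R h0" by (simp add: B_def)
  moreover have "h0 \<noteq> 0" using h0 by auto
  ultimately have eig: "\<mu> \<in> {l. \<exists>v. v \<noteq> 0 \<and> ?A *v v = l *\<^sub>R v}" by blast
  show ?thesis by (rule that[OF eig _ bound]) (simp add: \<mu>_def)
qed

lemma eigenvalue_AtA_le_lambda_max:
  fixes S :: "real^'n^'m"
  assumes "\<mu> \<in> {l. \<exists>v. v \<noteq> 0 \<and> (transpose S ** S) *v v = l *\<^sub>R v}"
  shows "\<mu> \<le> lambda_max (transpose S ** S)"
  unfolding lambda_max_def
  using assms finite_eigenvalues_symmetric[of "transpose S ** S"] by (simp add: matrix_transpose_mul)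

lemma lambda_max_AtA_nonneg:
  fixes S :: "real^'n^'m"
  shows "0 \<le> lambda_max (transpose S ** S)"
proof -
  obtain \<mu> where "\<mu> \<in> {l. \<exists>v. v \<noteq> 0 \<and> (transpose S ** S) *v v = l *\<^sub>R v}" "0 \<le> \<mu>"
    by (rule eigenvalue_bounding_norm_matrix_vector)
  then show ?thesis using eigenvalue_AtA_le_lambda_max by fastforce
qed

lemma norm_matrix_vector_sq_le_lambda_max:
  fixes S :: "real^'n^'m"
  shows "(norm (S *v h))^2 \<le> lambda_max (transpose S ** S) * (norm h)^2"
proof -
  obtain \<mu> where "\<mu> \<in> {l. \<exists>v. v \<noteq> 0 \<and> (transpose S ** S) *v v = l *\<^sub>R v}"
    and bound: "(norm (S *v h))^2 \<le> \<mu> * (norm h)^2"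
    using eigenvalue_bounding_norm_matrix_vector[of S] by blast
  then have "\<mu> * (norm h)^2 \<le> lambda_max (transpose S ** S) * (norm h)^2"
    by (intro mult_right_mono eigenvalue_AtA_le_lambda_max) auto
  with bound show ?thesis by linarith
qed

lemma L_S_max_nonneg:
  assumes "prob_space D" and "\<exists>L. AE S in D. lambda_max (transpose S ** S) \<le> L"
  shows "0 \<le> L_S_max D"
proof -
  interpret prob_space D by fact
  have "0 \<le> L" if "AE S in D. lambda_max (transpose S ** S) \<le> L" for L
  proof -
    from that have "AE S in D. 0 \<le> L"
      by eventually_elim (use lambda_max_AtA_nonneg in \<open>rule order_trans\<close>)
    then show ?thesis by simp
  qed
  then show ?thesis unfolding L_S_max_def using assms(2) by (intro cInf_greatest) auto
qed

lemma AE_lambda_max_le_L_S_max: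
  assumes "prob_space D" and fin: "\<exists>L. AE S in D. lambda_max (transpose S ** S) \<le> L"
  shows "AE S in D. lambda_max (transpose S ** S) \<le> L_S_max D"
proof -
  let ?\<Lambda> = "{L. AE S in D. lambda_max (transpose S ** S) \<le> L}"
  have "?\<Lambda> \<noteq> {}" using fin by auto
  have "AE S in D. lambda_max (transpose S ** S) \<le> L_S_max D + 1 / real (Suc n)" for n
  proof -
    have "Inf ?\<Lambda> < L_S_max D + 1 / real (Suc n)" unfolding L_S_max_def by simp
    then obtain L where "L \<in> ?\<Lambda>" "L < L_S_max D + 1 / real (Suc n)"
      using cInf_lessD[OF \<open>?\<Lambda> \<noteq> {}\<close>] by blast
    then show ?thesis by (auto elim: AE_mp)
  qed
  then have "AE S in D. \<forall>n. lambda_max (transpose S ** S) \<le> L_S_max D + 1 / real (Suc n)"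
    by (simp add: AE_all_countable)
  then show ?thesis
  proof eventually_elim
    case (elim S)
    show ?case
    proof (rule ccontr)
      assume "\<not> ?case"
      then have "0 < lambda_max (transpose S ** S) - L_S_max D" by simp
      then obtain n where "inverse (real (Suc n)) < lambda_max (transpose S ** S) - L_S_max D"
        using reals_Archimedean by blast
      with elim[rule_format, of n] show False by (simp add: field_simps)
    qed
  qed
qed

lemma AE_norm_matrix_vector_sq_le_L_S_max:
  assumes "prob_space D" and "\<exists>L. AE S in D. lambda_max (transpose S ** S) \<le> L"
  shows "AE S in D. \<forall>h. (norm (S *v h))^2 \<le> L_S_max D * (norm h)^2"
  using AE_lambda_max_le_L_S_max[OF assms]
proof eventually_elim
  case (elim S)
  show ?case
  proof
    fix h
    have "(norm (S *v h))^2 \<le> lambda_max (transpose S ** S) * (norm h)^2"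
      by (rule norm_matrix_vector_sq_le_lambda_max)
    also have "\<dots> \<le> L_S_max D * (norm h)^2" using elim by (intro mult_right_mono) auto
    finally show "(norm (S *v h))^2 \<le> L_S_max D * (norm h)^2" .
  qed
qed

subsection \<open>Convex smooth functions\<close>

lemma convex_on_has_derivative_ineq:
  fixes f :: "'a::real_normed_vector \<Rightarrow> real"
  assumes cvx: "convex_on UNIV f" and d: "(f has_derivative f') (at y)"
  shows "f y + f' (z - y) \<le> f z"
proof -
  define \<phi> where "\<phi> t = f (y + t *\<^sub>R (z - y))" for t :: real
  have "convex_on UNIV \<phi>"
  proof (rule convex_onI)
    fix t a b :: real assume "0 < t" "t < 1"
    have "y + ((1 - t) * a + t * b) *\<^sub>R (z - y)
        = (1 - t) *\<^sub>R (y + a *\<^sub>R (z - y)) + t *\<^sub>R (y + b *\<^sub>R (z - y))"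
      by (simp add: algebra_simps)
    then show "\<phi> ((1 - t) *\<^sub>R a + t *\<^sub>R b) \<le> (1 - t) * \<phi> a + t * \<phi> b"
      using convex_onD[OF cvx, of t] \<open>0 < t\<close> \<open>t < 1\<close> unfolding \<phi>_def by simp
  qed simp
  moreover have "(\<phi> has_field_derivative f' (z - y)) (at 0)"
  proof -
    have "((\<lambda>t. y + t *\<^sub>R (z - y)) has_derivative (\<lambda>t. t *\<^sub>R (z - y))) (at 0)"
      by (auto intro!: derivative_eq_intros)
    moreover have "(f has_derivative f') (at (y + 0 *\<^sub>R (z - y)))" using d by simp
    ultimately have "(\<phi> has_derivative (\<lambda>t. f' (t *\<^sub>R (z - y)))) (at 0)"
      unfolding \<phi>_def by (rule diff_chain_at[unfolded comp_def])
    moreover have "linear f'" by (rule bounded_linear.linear[OF has_derivative_bounded_linear[OF d]])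
    then have "(\<lambda>t. f' (t *\<^sub>R (z - y))) = (\<lambda>t. f' (z - y) * t)"
      by (simp add: linear_scale mult.commute)
    ultimately show ?thesis by (simp add: has_field_derivative_def)
  qed
  ultimately have "f' (z - y) * (1 - 0) \<le> \<phi> 1 - \<phi> 0"
    by (intro convex_on_imp_above_tangent[where A = UNIV]) auto
  then show ?thesis unfolding \<phi>_def by simp
qed

lemma L_smooth_has_derivative:
  "L_smooth L f g \<Longrightarrow> (f has_derivative (\<lambda>h. g x \<bullet> h)) (at x)"
  unfolding L_smooth_def by blast

lemma L_smooth_upper_bound:
  "L_smooth L f g \<Longrightarrow> f (x + h) \<le> f x + g x \<bullet> h + L / 2 * (norm h)^2"
  unfolding L_smooth_def by blast

lemma L_smooth_continuous:
  assumes "L_smooth L f g"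
  shows "continuous_on UNIV f"
  using has_derivative_continuous[OF L_smooth_has_derivative[OF assms]]
  by (simp add: continuous_at_imp_continuous_on)

text \<open>Co-coercivity: the tangent at \<open>y\<close> lies below \<open>f\<close> at \<open>x - (g x - g y)/L\<close>, while the
  quadratic upper bounds at \<open>x\<close> and \<open>y\<close> bound \<open>f\<close> there from above.\<close>

lemma L_smooth_convex_gradient_lipschitz:
  fixes f :: "real^'n \<Rightarrow> real"
  assumes sm: "L_smooth L f g" and cvx: "convex_on UNIV f" and L: "0 < L"
  shows "norm (g x - g y) \<le> L * norm (x - y)"
proof -
  define u where "u = g x - g y"
  define h where "h = (1 / L) *\<^sub>R u"
  have "f y + g y \<bullet> (x - y) - g y \<bullet> h \<le> f (x - h)"
    using convex_on_has_derivative_ineq[OF cvx L_smooth_has_derivative[OF sm], of y "x - h"]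
    by (simp add: inner_diff_right algebra_simps)
  moreover have "f (x - h) \<le> f x - g x \<bullet> h + L / 2 * (norm h)^2"
    using L_smooth_upper_bound[OF sm, of x "- h"] by simp
  moreover have "f x \<le> f y + g y \<bullet> (x - y) + L / 2 * (norm (x - y))^2"
    using L_smooth_upper_bound[OF sm, of y "x - y"] by simp
  moreover have "g x \<bullet> h - g y \<bullet> h = (norm u)^2 / L"
  proof -
    have "g x \<bullet> h - g y \<bullet> h = u \<bullet> h" by (simp add: u_def inner_diff_left)
    also have "\<dots> = (norm u)^2 / L" by (simp add: h_def power2_norm_eq_inner)
    finally show ?thesis .
  qed
  ultimately have "(norm u)^2 / L - L / 2 * (norm h)^2 \<le> L / 2 * (norm (x - y))^2"
    by linarith
  moreover have "(norm h)^2 = (norm u)^2 / L^2"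
    unfolding h_def using L by (simp add: power_divide)
  ultimately have "(norm u)^2 / L - L / 2 * ((norm u)^2 / L^2) \<le> L / 2 * (norm (x - y))^2"
    by simp
  then have "(norm u)^2 \<le> (L * norm (x - y))^2"
    using L by (simp add: field_simps power2_eq_square)
  then show ?thesis unfolding u_def by (rule power2_le_imp_le) (use L in simp)
qed

lemma L_smooth_convex_gradient_continuous:
  fixes f :: "real^'n \<Rightarrow> real"
  assumes "L_smooth L f g" "convex_on UNIV f" "0 < L"
  shows "continuous_on UNIV g"
  by (rule lipschitz_on_continuous_on[of L])
    (use L_smooth_convex_gradient_lipschitz[OF assms] \<open>0 < L\<close> in \<open>auto intro!: lipschitz_onI simp: dist_norm\<close>)

text \<open>Take the step \<open>v = -S\<^sup>T\<nabla>f(y)/(L\<^sub>fL\<^sub>S)\<close> in the quadratic upper bound at \<open>y\<close>.\<close>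

lemma L_smooth_sketched_gradient_bound:
  fixes f :: "real^'n \<Rightarrow> real"
  assumes sm: "L_smooth Lf f g" and "0 < Lf" "0 < Lm"
    and bound: "\<And>h. (norm (S *v h))^2 \<le> Lm * (norm h)^2" and lower: "\<And>z. finf \<le> f z"
  shows "(norm (transpose S *v g y))^2 \<le> 2 * (Lf * Lm) * (f y - finf)"
proof -
  define G where "G = transpose S *v g y"
  define v where "v = - (1 / (Lf * Lm)) *\<^sub>R G"
  have "finf \<le> f (y + S *v v)" by (rule lower)
  moreover have "f (y + S *v v) \<le> f y + g y \<bullet> (S *v v) + Lf / 2 * (norm (S *v v))^2"
    by (rule L_smooth_upper_bound[OF sm])
  moreover have "g y \<bullet> (S *v v) = - ((norm G)^2 / (Lf * Lm))"
    unfolding inner_matrix_vector_transpose G_def[symmetric] v_def by (simp add: power2_norm_eq_inner)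
  moreover have "Lf / 2 * (norm (S *v v))^2 \<le> Lf / 2 * (Lm * (norm v)^2)"
    using bound[of v] \<open>0 < Lf\<close> by (intro mult_left_mono) auto
  moreover have "Lf / 2 * (Lm * (norm v)^2) = (norm G)^2 / (2 * (Lf * Lm))"
    unfolding v_def using \<open>0 < Lf\<close> \<open>0 < Lm\<close> by (simp add: power_divide power2_eq_square field_simps)
  moreover have "(norm G)^2 / (Lf * Lm) = 2 * ((norm G)^2 / (2 * (Lf * Lm)))" by simp
  ultimately have "(norm G)^2 / (2 * (Lf * Lm)) \<le> f y - finf" by linarith
  then show ?thesis unfolding G_def using \<open>0 < Lf\<close> \<open>0 < Lm\<close> by (simp add: field_simps)
qed

lemma continuous_on_matrix_vector_mult:
  fixes A :: "'a::topological_space \<Rightarrow> real^'n^'m" and v :: "'a \<Rightarrow> real^'n"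
  assumes A: "continuous_on U A" and v: "continuous_on U v"
  shows "continuous_on U (\<lambda>z. A z *v v z)"
  unfolding matrix_vector_mult_def
  by (intro continuous_on_vec_lambda continuous_on_sum continuous_on_mult
      continuous_on_component[OF continuous_on_component[OF A]] continuous_on_component[OF v])

lemma continuous_on_transpose:
  fixes A :: "'a::topological_space \<Rightarrow> real^'n^'m"
  assumes "continuous_on U A"
  shows "continuous_on U (\<lambda>z. transpose (A z))"
  unfolding transpose_def
  by (intro continuous_on_vec_lambda continuous_on_component[OF continuous_on_component[OF assms]])

text \<open>Both are linear in the matrices \<open>S\<close> and \<open>S\<^sup>TS\<close>, whose integrability is assumed.\<close>

lemma inner_matrix_vector_eq_inner_outer:
  fixes S :: "real^'n^'m"
  shows "a \<bullet> (S *v w) = S \<bullet> (\<chi> i j. a$i * w$j)"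
  by (simp add: inner_vec_def matrix_vector_mult_def sum_distrib_left mult_ac)

lemma norm_matrix_vector_sq_eq_inner_outer:
  fixes S :: "real^'n^'m"
  shows "(norm (S *v w))^2 = (transpose S ** S) \<bullet> (\<chi> i j. w$i * w$j)"
  using inner_matrix_vector_transpose[of w "transpose S" "S *v w"]
  by (simp add: power2_norm_eq_inner matrix_vector_mul_assoc[symmetric]
      inner_matrix_vector_eq_inner_outer[symmetric] inner_commute)

subsection \<open>Integrals over sequences of sketches\<close>

lemma nn_integral_PiM_iter:
  assumes "prob_space D" and F: "F \<in> borel_measurable (PiM UNIV (\<lambda>_::nat. D))"
  shows "(\<integral>\<^sup>+\<omega>. F \<omega> \<partial>PiM UNIV (\<lambda>_. D))
       = (\<integral>\<^sup>+S. (\<integral>\<^sup>+\<omega>. F (case_nat S \<omega>) \<partial>PiM UNIV (\<lambda>_. D)) \<partial>D)"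
proof -
  interpret prob_space D by fact
  interpret S: sequence_space D ..
  interpret pair_sigma_finite D S.S ..
  have m: "(\<lambda>(s, \<omega>). case_nat s \<omega>) \<in> measurable (D \<Otimes>\<^sub>M S.S) S.S"
    unfolding split_beta' by (intro measurable_case_nat') auto
  have "(\<integral>\<^sup>+\<omega>. F \<omega> \<partial>S.S) = (\<integral>\<^sup>+\<omega>. F \<omega> \<partial>distr (D \<Otimes>\<^sub>M S.S) S.S (\<lambda>(s, \<omega>). case_nat s \<omega>))"
    by (simp add: S.PiM_iter)
  also have "\<dots> = (\<integral>\<^sup>+x. F (case_nat (fst x) (snd x)) \<partial>(D \<Otimes>\<^sub>M S.S))"
    using F m by (subst nn_integral_distr) (auto simp: split_beta')
  also have "\<dots> = (\<integral>\<^sup>+S. (\<integral>\<^sup>+\<omega>. F (case_nat S \<omega>) \<partial>S.S) \<partial>D)"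
    using measurable_compose[OF m F] by (subst S.nn_integral_fst[symmetric]) (auto simp: split_beta')
  finally show ?thesis .
qed

lemma integral_le_of_nn_integral_le:
  fixes g :: "'a \<Rightarrow> real"
  assumes "g \<in> borel_measurable M" "\<And>x. 0 \<le> g x"
    and "(\<integral>\<^sup>+x. ennreal (g x) \<partial>M) \<le> ennreal B" "0 \<le> B"
  shows "(\<integral>x. g x \<partial>M) \<le> B"
proof -
  have "(\<integral>x. g x \<partial>M) = enn2real (\<integral>\<^sup>+x. ennreal (g x) \<partial>M)"
    by (rule integral_eq_nn_integral) (use assms in auto)
  also have "\<dots> \<le> enn2real (ennreal B)" using assms(3) by (rule enn2real_mono) simp
  finally show ?thesis using assms(4) by simp
qed

subsection \<open>Double Sketched GD\<close>

locale dsgd_setting = prob_space D for D :: "(real^'n^'n) measure" +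
  fixes f :: "real^'n \<Rightarrow> real" and gradf :: "real^'n \<Rightarrow> real^'n"
    and s xs :: "real^'n" and Lf Lm finf \<gamma> :: real
  assumes D_sets: "sets D = sets borel"
    and ES: "integrable D (\<lambda>S. S)"
    and ESTS: "integrable D (\<lambda>S. transpose S ** S)"
    and convex: "convex_on UNIV f"
    and smooth: "L_smooth Lf f gradf"
    and Lf_pos: "0 < Lf" and Lm_pos: "0 < Lm"
    and AE_bound: "AE S in D. \<forall>h. (norm (S *v h))^2 \<le> Lm * (norm h)^2"
    and finf_le: "\<And>y. finf \<le> f y"
    and gamma_pos: "0 < \<gamma>" and gamma_le: "2 * \<gamma> * (Lf * Lm) \<le> 1"
    and xs_min: "\<And>x. f_tilde f s D xs \<le> f_tilde f s D x"
begin

abbreviation "ft \<equiv> f_tilde f s D"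

abbreviation "P \<equiv> PiM (UNIV :: nat set) (\<lambda>_. D)"

definition step :: "real^'n \<Rightarrow> real^'n^'n \<Rightarrow> real^'n" where
  "step x S = x - \<gamma> *\<^sub>R (transpose S *v gradf (s + S *v (x - s)))"

definition noise :: real where
  "noise = 2 * \<gamma>^2 * (Lf * Lm) * (ft xs - finf)"

lemma measurable_D_eq_borel: "measurable D M = measurable borel M"
  by (rule measurable_cong_sets[OF D_sets refl])

lemma continuous_on_sketched_point:
  "continuous_on UNIV (\<lambda>p :: (real^'n) \<times> (real^'n^'n). s + snd p *v (fst p - s))"
  by (intro continuous_intros continuous_on_matrix_vector_mult)

lemma continuous_on_step: "continuous_on UNIV (\<lambda>p. step (fst p) (snd p))"
  unfolding step_def
  by (intro continuous_intros continuous_on_matrix_vector_mult continuous_on_transpose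
      continuous_on_compose2[OF L_smooth_convex_gradient_continuous[OF smooth convex Lf_pos]
        continuous_on_sketched_point]) auto

lemma borel_measurable_step[measurable]: "(\<lambda>S. step x S) \<in> borel_measurable D"
proof -
  have "continuous_on UNIV (\<lambda>S. step (fst (x, S)) (snd (x, S)))"
    by (rule continuous_on_compose2[OF continuous_on_step]) (auto intro!: continuous_intros)
  then show ?thesis unfolding measurable_D_eq_borel by (intro borel_measurable_continuous_onI) simp
qed

lemma integrable_sketched_f: "integrable D (\<lambda>S. f (s + S *v w))"
proof (rule Bochner_Integration.integrable_bound)
  let ?M = "\<lambda>S. \<bar>finf\<bar> + \<bar>f s\<bar> + \<bar>S \<bullet> (\<chi> i j. gradf s $ i * w $ j)\<bar>
    + Lf / 2 * ((transpose S ** S) \<bullet> (\<chi> i j. w$i * w$j))"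
  show "integrable D ?M" using ES ESTS by simp
  show "(\<lambda>S. f (s + S *v w)) \<in> borel_measurable D"
    unfolding measurable_D_eq_borel
    by (intro borel_measurable_continuous_onI continuous_on_compose2[OF L_smooth_continuous[OF smooth]]
        continuous_intros continuous_on_matrix_vector_mult) auto
  have "norm (f (s + S *v w)) \<le> norm (?M S)" for S
  proof -
    have "f (s + S *v w) \<le> f s + gradf s \<bullet> (S *v w) + Lf / 2 * (norm (S *v w))^2"
      by (rule L_smooth_upper_bound[OF smooth])
    moreover have "finf \<le> f (s + S *v w)" by (rule finf_le)
    moreover have "0 \<le> Lf / 2 * (norm (S *v w))^2" using Lf_pos by simp
    ultimately have "norm (f (s + S *v w))
        \<le> \<bar>finf\<bar> + \<bar>f s\<bar> + \<bar>gradf s \<bullet> (S *v w)\<bar> + Lf / 2 * (norm (S *v w))^2"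
      unfolding real_norm_def abs_le_iff
      using abs_ge_self[of finf] abs_ge_minus_self[of "f s"] abs_ge_self[of "f s"]
        abs_ge_minus_self[of "gradf s \<bullet> (S *v w)"] abs_ge_self[of "gradf s \<bullet> (S *v w)"]
      by (intro conjI) linarith+
    also have "\<dots> = ?M S"
      by (simp only: norm_matrix_vector_sq_eq_inner_outer inner_matrix_vector_eq_inner_outer)
    finally show ?thesis by simp
  qed
  then show "AE S in D. norm (f (s + S *v w)) \<le> norm (?M S)" by simp
qed

lemma f_tilde_eq: "ft x = (\<integral>S. f (s + S *v (x - s)) \<partial>D)"
  unfolding f_tilde_def f_sketch_def ..

lemma f_tilde_ge_finf: "finf \<le> ft x"
proof -
  have "(\<integral>S. finf \<partial>D) \<le> (\<integral>S. f (s + S *v (x - s)) \<partial>D)"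
    by (intro integral_mono) (auto simp: integrable_sketched_f finf_le)
  then show ?thesis unfolding f_tilde_eq by (simp add: prob_space)
qed

lemma noise_nonneg: "0 \<le> noise"
  unfolding noise_def using f_tilde_ge_finf[of xs] Lf_pos Lm_pos by simp

lemma convex_f_tilde: "convex_on UNIV ft"
proof (rule convex_onI)
  fix t :: real and a b :: "real^'n" assume t: "0 < t" "t < 1"
  have "f (s + S *v ((1 - t) *\<^sub>R a + t *\<^sub>R b - s))
      \<le> (1 - t) * f (s + S *v (a - s)) + t * f (s + S *v (b - s))" for S
  proof -
    have "s + S *v ((1 - t) *\<^sub>R a + t *\<^sub>R b - s)
        = (1 - t) *\<^sub>R (s + S *v (a - s)) + t *\<^sub>R (s + S *v (b - s))"
      by (simp add: matrix_vector_right_distrib matrix_vector_mult_diff_distrib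
          matrix_vector_mult_scaleR algebra_simps)
    then show ?thesis using convex_onD[OF convex, of t] t by simp
  qed
  then have "ft ((1 - t) *\<^sub>R a + t *\<^sub>R b)
      \<le> (\<integral>S. (1 - t) * f (s + S *v (a - s)) + t * f (s + S *v (b - s)) \<partial>D)"
    unfolding f_tilde_eq using integrable_sketched_f by (intro integral_mono) auto
  also have "\<dots> = (1 - t) * ft a + t * ft b"
    unfolding f_tilde_eq using integrable_sketched_f by simp
  finally show "ft ((1 - t) *\<^sub>R a + t *\<^sub>R b) \<le> (1 - t) * ft a + t * ft b" .
qed simp

lemma borel_measurable_f_tilde[measurable]: "ft \<in> borel_measurable borel"
  by (intro borel_measurable_continuous_onI convex_on_continuous[OF open_UNIV convex_f_tilde])


lemma step_dist_sq_le:
  assumes bound: "\<And>h. (norm (S *v h))^2 \<le> Lm * (norm h)^2"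
  shows "(norm (step x S - xs))^2 \<le> (norm (x - xs))^2
     - 2 * \<gamma> * (f (s + S *v (x - s)) - f (s + S *v (xs - s)))
     + 2 * \<gamma>^2 * (Lf * Lm) * (f (s + S *v (x - s)) - finf)"
proof -
  define y where "y = s + S *v (x - s)"
  define G where "G = transpose S *v gradf y"
  have "f y + gradf y \<bullet> ((s + S *v (xs - s)) - y) \<le> f (s + S *v (xs - s))"
    by (rule convex_on_has_derivative_ineq[OF convex L_smooth_has_derivative[OF smooth]])
  moreover have "gradf y \<bullet> ((s + S *v (xs - s)) - y) = - (G \<bullet> (x - xs))"
    unfolding y_def G_def
    by (simp add: dot_lmul_matrix matrix_vector_mult_diff_distrib inner_diff_right)
  ultimately have descent: "f y - f (s + S *v (xs - s)) \<le> G \<bullet> (x - xs)" by simp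
  have "(norm G)^2 \<le> 2 * (Lf * Lm) * (f y - finf)"
    unfolding G_def by (rule L_smooth_sketched_gradient_bound[OF smooth Lf_pos Lm_pos bound finf_le])
  then have "\<gamma>^2 * (norm G)^2 \<le> 2 * \<gamma>^2 * (Lf * Lm) * (f y - finf)"
    by (metis mult.assoc mult.left_commute mult_left_mono zero_le_power2)
  moreover have "(norm (step x S - xs))^2
      = (norm (x - xs))^2 - 2 * \<gamma> * (G \<bullet> (x - xs)) + \<gamma>^2 * (norm G)^2"
  proof -
    have "step x S - xs = (x - xs) - \<gamma> *\<^sub>R G" unfolding step_def G_def y_def by simp
    then show ?thesis
      unfolding power2_norm_eq_inner \<open>step x S - xs = (x - xs) - \<gamma> *\<^sub>R G\<close>
      by (simp add: inner_diff_left inner_diff_right inner_commute power2_eq_square algebra_simps)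
  qed
  moreover have "2 * \<gamma> * (f y - f (s + S *v (xs - s))) \<le> 2 * \<gamma> * (G \<bullet> (x - xs))"
    using descent gamma_pos by (intro mult_left_mono) auto
  ultimately show ?thesis unfolding y_def by linarith
qed

lemma nn_integral_step_dist_sq_le:
  "(\<integral>\<^sup>+S. ennreal ((norm (step x S - xs))^2 + \<gamma> * (ft x - ft xs)) \<partial>D)
     \<le> ennreal ((norm (x - xs))^2 + noise)"
proof -
  define R where "R S = (norm (x - xs))^2 + \<gamma> * (ft x - ft xs)
     - 2 * \<gamma> * (f (s + S *v (x - s)) - f (s + S *v (xs - s)))
     + 2 * \<gamma>^2 * (Lf * Lm) * (f (s + S *v (x - s)) - finf)" for S
  have AE_le: "AE S in D. (norm (step x S - xs))^2 + \<gamma> * (ft x - ft xs) \<le> R S"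
    using AE_bound
  proof eventually_elim
    case (elim S)
    then show ?case using step_dist_sq_le[of S x] unfolding R_def by simp
  qed
  have "0 \<le> \<gamma> * (ft x - ft xs)" using xs_min gamma_pos by simp
  note a_nonneg = this
  from AE_le have AE_nonneg: "AE S in D. 0 \<le> R S"
  proof eventually_elim
    case (elim S)
    have "0 \<le> (norm (step x S - xs))^2 + \<gamma> * (ft x - ft xs)" using a_nonneg by simp
    with elim show ?case by linarith
  qed
  have integrable_R: "integrable D R" unfolding R_def using integrable_sketched_f by simp
  have "(\<integral>S. R S \<partial>D) = (norm (x - xs))^2 + \<gamma> * (ft x - ft xs)
      - 2 * \<gamma> * (ft x - ft xs) + 2 * \<gamma>^2 * (Lf * Lm) * (ft x - finf)"
    unfolding R_def f_tilde_eq using integrable_sketched_f by (simp add: prob_space)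
  also have "\<dots> = (norm (x - xs))^2 + noise
      - \<gamma> * (ft x - ft xs) * (1 - 2 * \<gamma> * (Lf * Lm))"
    unfolding noise_def by (simp add: algebra_simps power2_eq_square)
  also have "\<dots> \<le> (norm (x - xs))^2 + noise"
    using xs_min gamma_pos gamma_le by simp
  finally have integral_R: "(\<integral>S. R S \<partial>D) \<le> (norm (x - xs))^2 + noise" .
  have "(\<integral>\<^sup>+S. ennreal ((norm (step x S - xs))^2 + \<gamma> * (ft x - ft xs)) \<partial>D)
      \<le> (\<integral>\<^sup>+S. ennreal (R S) \<partial>D)"
    using AE_le by (intro nn_integral_mono_AE) (auto elim: AE_mp intro: ennreal_leI)
  also have "\<dots> = ennreal (\<integral>S. R S \<partial>D)"
    by (rule nn_integral_eq_integral[OF integrable_R AE_nonneg])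
  also have "\<dots> \<le> ennreal ((norm (x - xs))^2 + noise)"
    using integral_R by (rule ennreal_leI)
  finally show ?thesis .
qed

lemma dsgd_Suc_step: "dsgd gradf s \<gamma> x0 \<omega> (Suc t) = step (dsgd gradf s \<gamma> x0 \<omega> t) (\<omega> t)"
  by (simp add: step_def)

lemma dsgd_case_nat_Suc:
  "dsgd gradf s \<gamma> x0 (case_nat S \<omega>) (Suc t) = dsgd gradf s \<gamma> (step x0 S) \<omega> t"
  by (induction t) (simp_all add: step_def)

lemma borel_measurable_dsgd[measurable]: "(\<lambda>\<omega>. dsgd gradf s \<gamma> x0 \<omega> t) \<in> borel_measurable P"
proof (induction t)
  case (Suc t)
  have "(\<lambda>\<omega>. \<omega> t) \<in> measurable P borel"
    using measurable_component_singleton[of t UNIV "\<lambda>_. D"]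
    by (simp add: measurable_cong_sets[OF refl D_sets])
  with Suc have "(\<lambda>\<omega>. (dsgd gradf s \<gamma> x0 \<omega> t, \<omega> t)) \<in> measurable P (borel \<Otimes>\<^sub>M borel)"
    by (rule measurable_Pair)
  moreover have "(\<lambda>p. step (fst p) (snd p)) \<in> borel_measurable (borel \<Otimes>\<^sub>M borel)"
    unfolding borel_prod by (rule borel_measurable_continuous_onI[OF continuous_on_step])
  ultimately have "(\<lambda>\<omega>. step (fst (dsgd gradf s \<gamma> x0 \<omega> t, \<omega> t)) (snd (dsgd gradf s \<gamma> x0 \<omega> t, \<omega> t)))
      \<in> borel_measurable P"
    by (rule measurable_compose[unfolded comp_def])
  then show ?case unfolding dsgd_Suc_step by simp
qed simp

text \<open>The first sketch is split off the product measure; the remaining iterates restart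
  from \<open>step x\<^sup>0 S\<close>.\<close>

lemma nn_integral_potential_le:
  "(\<integral>\<^sup>+\<omega>. ennreal ((norm (dsgd gradf s \<gamma> x0 \<omega> T - xs))^2
       + \<gamma> * (\<Sum>t<T. ft (dsgd gradf s \<gamma> x0 \<omega> t) - ft xs)) \<partial>P)
     \<le> ennreal ((norm (x0 - xs))^2 + real T * noise)"
proof (induction T arbitrary: x0)
  case 0
  interpret P: prob_space P by (rule prob_space_PiM) (rule prob_space_axioms)
  show ?case by (simp add: P.emeasure_space_1)
next
  case (Suc T)
  interpret P: prob_space P by (rule prob_space_PiM) (rule prob_space_axioms)
  define V where "V x \<omega> = (norm (dsgd gradf s \<gamma> x \<omega> T - xs))^2
       + \<gamma> * (\<Sum>t<T. ft (dsgd gradf s \<gamma> x \<omega> t) - ft xs)" for x \<omega>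
  define a where "a = \<gamma> * (ft x0 - ft xs)"
  have a_nonneg: "0 \<le> a" unfolding a_def using xs_min gamma_pos by simp
  have V_nonneg: "0 \<le> V x \<omega>" for x \<omega>
    unfolding V_def using xs_min gamma_pos by (intro add_nonneg_nonneg mult_nonneg_nonneg sum_nonneg) auto
  define F where "F \<omega> = ennreal ((norm (dsgd gradf s \<gamma> x0 \<omega> (Suc T) - xs))^2
       + \<gamma> * (\<Sum>t<Suc T. ft (dsgd gradf s \<gamma> x0 \<omega> t) - ft xs))" for \<omega>
  have F_split: "F (case_nat S \<omega>) = ennreal (a + V (step x0 S) \<omega>)" for S \<omega>
    unfolding F_def V_def a_def sum.lessThan_Suc_shift
    by (simp del: dsgd.simps(2) add: dsgd_case_nat_Suc algebra_simps)
  have "(\<integral>\<^sup>+\<omega>. F \<omega> \<partial>P) = (\<integral>\<^sup>+S. (\<integral>\<^sup>+\<omega>. F (case_nat S \<omega>) \<partial>P) \<partial>D)"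
    by (rule nn_integral_PiM_iter[OF prob_space_axioms]) (unfold F_def, measurable)
  also have "\<dots> = (\<integral>\<^sup>+S. (\<integral>\<^sup>+\<omega>. ennreal (a + V (step x0 S) \<omega>) \<partial>P) \<partial>D)"
    by (simp only: F_split)
  also have "\<dots> = (\<integral>\<^sup>+S. ennreal a + (\<integral>\<^sup>+\<omega>. ennreal (V (step x0 S) \<omega>) \<partial>P) \<partial>D)"
    using a_nonneg V_nonneg
    by (simp add: ennreal_plus nn_integral_add P.emeasure_space_1 V_def)
  also have "\<dots> \<le> (\<integral>\<^sup>+S. ennreal a + ennreal ((norm (step x0 S - xs))^2 + real T * noise) \<partial>D)"
    using Suc.IH unfolding V_def by (intro nn_integral_mono add_left_mono)
  also have "\<dots> = (\<integral>\<^sup>+S. ennreal ((norm (step x0 S - xs))^2 + a) + ennreal (real T * noise) \<partial>D)"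
  proof (rule nn_integral_cong)
    fix S
    let ?d = "(norm (step x0 S - xs))^2"
    have "ennreal a + ennreal (?d + real T * noise) = ennreal (a + (?d + real T * noise))"
      using a_nonneg noise_nonneg by (simp add: ennreal_plus)
    also have "\<dots> = ennreal ((?d + a) + real T * noise)" by (simp add: add_ac)
    also have "\<dots> = ennreal (?d + a) + ennreal (real T * noise)"
      using a_nonneg noise_nonneg by (simp add: ennreal_plus)
    finally show "ennreal a + ennreal (?d + real T * noise) = ennreal (?d + a) + ennreal (real T * noise)" .
  qed
  also have "\<dots> = (\<integral>\<^sup>+S. ennreal ((norm (step x0 S - xs))^2 + a) \<partial>D) + ennreal (real T * noise)"
    by (subst nn_integral_add) (simp_all add: emeasure_space_1)
  also have "\<dots> \<le> ennreal ((norm (x0 - xs))^2 + noise) + ennreal (real T * noise)"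
    using nn_integral_step_dist_sq_le[of x0] unfolding a_def by (rule add_right_mono)
  also have "\<dots> = ennreal ((norm (x0 - xs))^2 + noise + real T * noise)"
    using noise_nonneg by (simp add: ennreal_plus)
  also have "(norm (x0 - xs))^2 + noise + real T * noise = (norm (x0 - xs))^2 + real (Suc T) * noise"
    by (simp add: algebra_simps)
  finally show ?case unfolding F_def .
qed

lemma expected_avg_suboptimality_le:
  assumes "0 < T"
  shows "(\<integral>\<omega>. (\<Sum>t<T. ft (dsgd gradf s \<gamma> x0 \<omega> t) - ft xs) / real T \<partial>P)
     \<le> (norm (x0 - xs))^2 / (\<gamma> * real T) + 2 * \<gamma> * (Lf * Lm) * (ft xs - finf)"
proof -
  define V where "V \<omega> = (norm (dsgd gradf s \<gamma> x0 \<omega> T - xs))^2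
       + \<gamma> * (\<Sum>t<T. ft (dsgd gradf s \<gamma> x0 \<omega> t) - ft xs)" for \<omega>
  define c where "c = 1 / (\<gamma> * real T)"
  have c_pos: "0 < c" unfolding c_def using gamma_pos assms by simp
  have sum_nonneg: "0 \<le> (\<Sum>t<T. ft (dsgd gradf s \<gamma> x0 \<omega> t) - ft xs)" for \<omega>
    using xs_min by (intro sum_nonneg) auto
  then have V_nonneg: "0 \<le> V \<omega>" for \<omega> unfolding V_def using gamma_pos by simp
  have avg_le: "(\<Sum>t<T. ft (dsgd gradf s \<gamma> x0 \<omega> t) - ft xs) / real T \<le> c * V \<omega>" for \<omega>
    unfolding c_def V_def using gamma_pos assms by (simp add: field_simps)
  have "(\<integral>\<^sup>+\<omega>. ennreal ((\<Sum>t<T. ft (dsgd gradf s \<gamma> x0 \<omega> t) - ft xs) / real T) \<partial>P)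
      \<le> (\<integral>\<^sup>+\<omega>. ennreal c * ennreal (V \<omega>) \<partial>P)"
    using avg_le c_pos V_nonneg by (intro nn_integral_mono) (simp add: ennreal_mult[symmetric] ennreal_leI)
  also have "\<dots> = ennreal c * (\<integral>\<^sup>+\<omega>. ennreal (V \<omega>) \<partial>P)"
    unfolding V_def by (rule nn_integral_cmult) measurable
  also have "\<dots> \<le> ennreal c * ennreal ((norm (x0 - xs))^2 + real T * noise)"
    unfolding V_def by (intro mult_left_mono nn_integral_potential_le) simp
  also have "\<dots> = ennreal (c * ((norm (x0 - xs))^2 + real T * noise))"
    by (rule ennreal_mult[symmetric]) (use c_pos noise_nonneg in auto)
  also have "c * ((norm (x0 - xs))^2 + real T * noise)
      = (norm (x0 - xs))^2 / (\<gamma> * real T) + 2 * \<gamma> * (Lf * Lm) * (ft xs - finf)"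
    unfolding c_def noise_def using gamma_pos assms by (simp add: field_simps power2_eq_square)
  finally show ?thesis
    using sum_nonneg assms gamma_pos f_tilde_ge_finf[of xs] Lf_pos Lm_pos
    by (intro integral_le_of_nn_integral_le) auto
qed

end

lemma step_size_bounds:
  fixes \<gamma> Lf Lm :: real
  assumes "0 < \<gamma>" "\<gamma> \<le> 1 / (2 * Lf * Lm)" "0 \<le> Lm"
  shows "0 < Lf" "0 < Lm" "2 * \<gamma> * (Lf * Lm) \<le> 1"
proof -
  have "0 < 1 / (2 * Lf * Lm)" using assms(1,2) by linarith
  then have "0 < Lf * Lm" by (simp add: zero_less_divide_iff mult.assoc)
  then show "0 < Lm" "0 < Lf" using \<open>0 \<le> Lm\<close> by (auto simp: zero_less_mult_iff)
  show "2 * \<gamma> * (Lf * Lm) \<le> 1"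
    using assms(2) \<open>0 < Lf * Lm\<close> by (simp add: field_simps)
qed

theorem mainTheorem9:
  fixes f :: "real^'n \<Rightarrow> real" and gradf :: "real^'n \<Rightarrow> real^'n"
    and s x0 xstar :: "real^'n" and D :: "(real^'n^'n) measure"
    and Lf \<gamma> :: real and T :: nat
  assumes D_prob: "prob_space D"
    and D_sets: "sets D = sets borel"
    and ES: "integrable D (\<lambda>S. S)" "(\<integral>S. S \<partial>D) = mat 1"
    and ESTS: "integrable D (\<lambda>S. transpose S ** S)"
    and convex: "convex_on UNIV f"
    and smooth: "L_smooth Lf f gradf"
    and bdd: "bdd_below (range f)"
    and Lmax_fin: "\<exists>L. AE S in D. lambda_max (transpose S ** S) \<le> L"
    and xstar_min: "\<forall>x. f_tilde f s D xstar \<le> f_tilde f s D x"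
    and gamma_pos: "0 < \<gamma>"
    and gamma_le: "\<gamma> \<le> 1 / (2 * Lf * L_S_max D)"
    and T_ge: "T \<ge> 1"
  shows "(\<integral>\<omega>. (\<Sum>t<T. f_tilde f s D (dsgd gradf s \<gamma> x0 \<omega> t)
                        - (INF x. f_tilde f s D x)) / real T
          \<partial>(PiM UNIV (\<lambda>_::nat. D)))
       \<le> (norm (x0 - xstar))^2 / (\<gamma> * real T)
         + 2 * \<gamma> * Lf * L_S_max D * ((INF x. f_tilde f s D x) - (INF x. f x))"
proof -
  note step_size = step_size_bounds[OF gamma_pos gamma_le L_S_max_nonneg[OF D_prob Lmax_fin]]
  have "(INF x. f x) \<le> f y" for y using bdd by (rule cINF_lower) simp
  interpret dsgd_setting D f gradf s xstar Lf "L_S_max D" "INF x. f x" \<gamma>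
    using D_prob D_sets ES(1) ESTS convex smooth step_size
      AE_norm_matrix_vector_sq_le_L_S_max[OF D_prob Lmax_fin] \<open>\<And>y. (INF x. f x) \<le> f y\<close>
      gamma_pos xstar_min
    by (intro dsgd_setting.intro dsgd_setting_axioms.intro) auto
  have "(INF x. ft x) = ft xstar" by (rule cInf_eq_minimum) (use xstar_min in auto)
  with expected_avg_suboptimality_le[of T x0] T_ge show ?thesis by (simp add: mult.assoc)
qed

end
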